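(* Let $l,k\ge1$ and let $u=\mathrm{sgrad}\,f$, $v=\mathrm{sgrad}\,h$ with $f\in\mathcal Y_l$, $h\in\mathcal Y_k$. Then the operator $B$ on $\mathrm{SVect}(\mathbb S^2)\otimes\mathbb C$ defined by $\langle B(u,v),w\rangle=\langle u,[v,w]\rangle$ for all $w$ satisfies $$k(k+1)\,B(u,v)=-l(l+1)\,B(v,u).$$
   Context: $\mathbb S^2$ with spherical coordinates $(\theta,\phi)$, round metric $d\theta^2+\sin^2\theta\,d\phi^2$, area form $\mu=\sin\theta\,d\theta\wedge d\phi$. $\mathrm{SVect}(\mathbb S^2)$: divergence-free vector fields, with inner product $\langle u,v\rangle=\int_{\mathbb S^2}g(u,v)\mu$ (extended complex-bilinearly or Hermitian; the identity is linear) and Lie bracket $[\cdot,\cdot]$ of vector fields (either sign convention). $\mathrm{sgrad}\,f=\frac1{\sin\theta}(\partial_\phi f\,\partial_\theta-\partial_\theta f\,\partial_\phi)$. $\mathcal Y_l$ is the span of the spherical harmonics $Y^m_l$, $-l\le m\le l$, i.e. the eigenspace $\Delta f=-l(l+1)f$ of the Laplace–Beltrami operator. *)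

theory Defs
  imports "HOL-Analysis.Analysis"
begin

definition pd :: "3 \<Rightarrow> (real^3 \<Rightarrow> complex) \<Rightarrow> real^3 \<Rightarrow> complex" where
  "pd i G x = frechet_derivative G (at x) (axis i 1)"

fun iterD :: "3 list \<Rightarrow> (real^3 \<Rightarrow> complex) \<Rightarrow> real^3 \<Rightarrow> complex" where
  "iterD [] G = G"
| "iterD (i # is) G = pd i (iterD is G)"

definition smooth3 :: "(real^3 \<Rightarrow> complex) \<Rightarrow> bool" where
  "smooth3 G \<longleftrightarrow> (\<forall>is. \<forall>x. iterD is G differentiable (at x))"

definition sph :: "real \<Rightarrow> real \<Rightarrow> real^3" where
  "sph \<theta> \<phi> = vector [sin \<theta> * cos \<phi>, sin \<theta> * sin \<phi>, cos \<theta>]"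

text \<open>Coordinate vector fields d/dtheta and d/dphi, as ambient vectors.\<close>
definition eth :: "real \<Rightarrow> real \<Rightarrow> real^3" where
  "eth \<theta> \<phi> = vector [cos \<theta> * cos \<phi>, cos \<theta> * sin \<phi>, - sin \<theta>]"

definition eph :: "real \<Rightarrow> real \<Rightarrow> real^3" where
  "eph \<theta> \<phi> = vector [- sin \<theta> * sin \<phi>, sin \<theta> * cos \<phi>, 0]"

definition chart :: "(real \<times> real) set" where
  "chart = {0<..<pi} \<times> UNIV"

definition dth :: "(real \<Rightarrow> real \<Rightarrow> complex) \<Rightarrow> real \<Rightarrow> real \<Rightarrow> complex" where
  "dth g \<theta> \<phi> = vector_derivative (\<lambda>t. g t \<phi>) (at \<theta>)"

definition dph :: "(real \<Rightarrow> real \<Rightarrow> complex) \<Rightarrow> real \<Rightarrow> real \<Rightarrow> complex" where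
  "dph g \<theta> \<phi> = vector_derivative (\<lambda>t. g \<theta> t) (at \<phi>)"

definition pb :: "(real^3 \<Rightarrow> complex) \<Rightarrow> real \<Rightarrow> real \<Rightarrow> complex" where
  "pb F \<theta> \<phi> = F (sph \<theta> \<phi>)"

definition LB :: "(real \<Rightarrow> real \<Rightarrow> complex) \<Rightarrow> real \<Rightarrow> real \<Rightarrow> complex" where
  "LB g \<theta> \<phi> = dth (\<lambda>t p. of_real (sin t) * dth g t p) \<theta> \<phi> / of_real (sin \<theta>)
              + dph (dph g) \<theta> \<phi> / of_real ((sin \<theta>)\<^sup>2)"

text \<open>Yl l: smooth (complex) functions on the sphere (given by a smooth ambient
  representative, only its values on the sphere matter) that are eigenfunctions
  of the Laplace-Beltrami operator with eigenvalue -l(l+1).\<close>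
definition Yl :: "nat \<Rightarrow> (real^3 \<Rightarrow> complex) set" where
  "Yl l = {F. smooth3 F \<and>
     (\<forall>(\<theta>,\<phi>)\<in>chart. LB (pb F) \<theta> \<phi> = - of_nat (l * (l + 1)) * pb F \<theta> \<phi>)}"

text \<open>A (complexified) vector field a d/dtheta + b d/dphi, given by its coordinate components.\<close>
type_synonym vf = "(real \<Rightarrow> real \<Rightarrow> complex) \<times> (real \<Rightarrow> real \<Rightarrow> complex)"

text \<open>Smoothness on the whole sphere (including the poles): the field, viewed as
  an ambient vector field along the sphere, is the restriction of a smooth map R^3 \<rightarrow> C^3.\<close>
definition smooth_vf :: "vf \<Rightarrow> bool" where
  "smooth_vf X \<longleftrightarrow> (\<exists>V :: 3 \<Rightarrow> real^3 \<Rightarrow> complex. (\<forall>i. smooth3 (V i)) \<and>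
     (\<forall>(\<theta>,\<phi>)\<in>chart. \<forall>i. V i (sph \<theta> \<phi>) =
        fst X \<theta> \<phi> * of_real (eth \<theta> \<phi> $ i) + snd X \<theta> \<phi> * of_real (eph \<theta> \<phi> $ i)))"

text \<open>Divergence w.r.t. the area form sin theta dtheta dphi.\<close>
definition divg :: "vf \<Rightarrow> real \<Rightarrow> real \<Rightarrow> complex" where
  "divg X \<theta> \<phi> = dth (\<lambda>t p. of_real (sin t) * fst X t p) \<theta> \<phi> / of_real (sin \<theta>)
                 + dph (snd X) \<theta> \<phi>"

definition SVect :: "vf set" where
  "SVect = {X. smooth_vf X \<and> (\<forall>(\<theta>,\<phi>)\<in>chart. divg X \<theta> \<phi> = 0)}"

definition bracket :: "vf \<Rightarrow> vf \<Rightarrow> vf" where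
  "bracket X Y =
    ((\<lambda>\<theta> \<phi>. fst X \<theta> \<phi> * dth (fst Y) \<theta> \<phi> + snd X \<theta> \<phi> * dph (fst Y) \<theta> \<phi>
            - fst Y \<theta> \<phi> * dth (fst X) \<theta> \<phi> - snd Y \<theta> \<phi> * dph (fst X) \<theta> \<phi>),
     (\<lambda>\<theta> \<phi>. fst X \<theta> \<phi> * dth (snd Y) \<theta> \<phi> + snd X \<theta> \<phi> * dph (snd Y) \<theta> \<phi>
            - fst Y \<theta> \<phi> * dth (snd X) \<theta> \<phi> - snd Y \<theta> \<phi> * dph (snd X) \<theta> \<phi>))"

text \<open>Round metric d theta^2 + sin^2 theta d phi^2, extended complex-bilinearly.\<close>
definition gmet :: "vf \<Rightarrow> vf \<Rightarrow> real \<Rightarrow> real \<Rightarrow> complex" where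
  "gmet X Y \<theta> \<phi> = fst X \<theta> \<phi> * fst Y \<theta> \<phi>
                   + of_real ((sin \<theta>)\<^sup>2) * (snd X \<theta> \<phi> * snd Y \<theta> \<phi>)"

definition ip :: "vf \<Rightarrow> vf \<Rightarrow> complex" where
  "ip X Y = integral (cbox (0, 0) (pi, 2 * pi))
              (\<lambda>(\<theta>, \<phi>). gmet X Y \<theta> \<phi> * of_real (sin \<theta>))"

definition sgrad :: "(real^3 \<Rightarrow> complex) \<Rightarrow> vf" where
  "sgrad F = ((\<lambda>\<theta> \<phi>. dph (pb F) \<theta> \<phi> / of_real (sin \<theta>)),
              (\<lambda>\<theta> \<phi>. - dth (pb F) \<theta> \<phi> / of_real (sin \<theta>)))"

end

(* With kap = k (k + 1) and lam = l (l + 1), write f = F o sph, h = H o sph and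
   X = kap w(h) grad f + lam w(f) grad h + kap lam f h w.  The eigenvalue equations for f
   and h, div w = 0 and the symmetry of second derivatives give pointwise
     kap g(sgrad F, [sgrad H, w]) + lam g(sgrad H, [sgrad F, w]) = - div X,
   so the left-hand side integrates to zero over the sphere.  To integrate across the poles,
   everything is expressed through the components of the ambient gradients of F and H and of
   an ambient representative of w along the frame (eth, eph / sin theta).  These are smooth
   on the whole rectangle [0, pi] x [0, 2 pi], on which sin theta div X splits into a
   theta-derivative of a function vanishing at theta = 0, pi and a phi-derivative of a
   2 pi-periodic function. *)

theory Submission
  imports Defs
begin

section \<open>Calculus in the parameter plane\<close>

lemma integral_eq_diff_of_has_vector_derivative:
  fixes f :: "real \<Rightarrow> 'a::banach"
  assumes "a \<le> b" and "\<And>x. (f has_vector_derivative f' x) (at x)"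
  shows "integral {a..b} f' = f b - f a"
  by (rule integral_unique, rule fundamental_theorem_of_calculus)
     (use assms in \<open>auto intro: has_vector_derivative_at_within\<close>)

lemma iterated_integral_eq_corners:
  fixes g gx gxy :: "real \<Rightarrow> real \<Rightarrow> 'a::banach"
  assumes dx: "\<And>x y. ((\<lambda>t. g t y) has_vector_derivative gx x y) (at x)"
    and dxy: "\<And>x y. ((\<lambda>t. gx x t) has_vector_derivative gxy x y) (at y)"
    and "a \<le> b" "c \<le> d"
  shows "integral {a..b} (\<lambda>x. integral {c..d} (gxy x)) = g b d - g b c - g a d + g a c"
proof -
  have "integral {a..b} (\<lambda>x. integral {c..d} (gxy x)) = integral {a..b} (\<lambda>x. gx x d - gx x c)"
    using integral_eq_diff_of_has_vector_derivative[OF \<open>c \<le> d\<close> dxy] by simp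
  also have "\<dots> = (g b d - g b c) - (g a d - g a c)"
    by (rule integral_eq_diff_of_has_vector_derivative[OF \<open>a \<le> b\<close>])
       (intro has_vector_derivative_diff dx)
  finally show ?thesis by simp
qed

lemma continuous_eq_0_if_box_integrals_eq_0:
  fixes D :: "real \<times> real \<Rightarrow> 'a::banach"
  assumes cont: "continuous_on UNIV D"
    and box: "\<And>a b c d. a \<le> b \<Longrightarrow> c \<le> d \<Longrightarrow> integral (cbox (a, c) (b, d)) D = 0"
  shows "D (x, y) = 0"
proof (rule ccontr)
  define e where "e = norm (D (x, y))"
  assume "D (x, y) \<noteq> 0"
  then have e: "e > 0" by (simp add: e_def)
  then obtain \<delta> where \<delta>: "\<delta> > 0" "\<And>z. dist z (x, y) < \<delta> \<Longrightarrow> dist (D z) (D (x, y)) < e/2"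
    using cont unfolding continuous_on_iff by (metis UNIV_I half_gt_zero)
  define h where "h = \<delta>/4"
  have h: "h > 0" using \<delta> by (simp add: h_def)
  let ?B = "cbox (x, y) (x + h, y + h)"
  have "D integrable_on ?B"
    by (rule integrable_continuous, rule continuous_on_subset[OF cont]) simp
  moreover have "integral ?B D = 0"
    using h by (intro box) auto
  ultimately have "(D has_integral 0) ?B"
    by (metis has_integral_integral)
  then have int: "((\<lambda>z. D z - D (x, y)) has_integral 0 - measure lborel ?B *\<^sub>R D (x, y)) ?B"
    by (intro has_integral_diff has_integral_const)
  have bound: "norm (D z - D (x, y)) \<le> e/2" if "z \<in> ?B" for z
  proof -
    obtain a b where z: "z = (a, b)" by fastforce
    have "dist z (x, y) \<le> norm (a - x) + norm (b - y)"
      using norm_Pair_le[of "a - x" "b - y"] by (simp add: z dist_norm)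
    also have "\<dots> \<le> h + h"
      using that by (auto simp: z)
    also have "\<dots> < \<delta>" using h h_def by simp
    finally show ?thesis using \<delta>(2)[of z] by (simp add: dist_norm)
  qed
  then have "norm (measure lborel ?B *\<^sub>R D (x, y)) \<le> e/2 * measure lborel ?B"
    using has_integral_bound[OF _ int bound] e by simp
  then have "h * h * e \<le> e/2 * (h * h)"
    using h by (simp add: content_Pair e_def)
  then show False using h e by (simp add: mult_le_cancel_left)
qed

lemma box_integral_eq_corners:
  fixes g gx gxy :: "real \<Rightarrow> real \<Rightarrow> 'a::banach"
  assumes dx: "\<And>x y. ((\<lambda>t. g t y) has_vector_derivative gx x y) (at x)"
    and dxy: "\<And>x y. ((\<lambda>t. gx x t) has_vector_derivative gxy x y) (at y)"
    and cont: "continuous_on UNIV (\<lambda>z. gxy (fst z) (snd z))"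
    and "a \<le> b" "c \<le> d"
  shows "integral (cbox (a, c) (b, d)) (\<lambda>z. gxy (fst z) (snd z)) = g b d - g b c - g a d + g a c"
  using integral_prod_continuous[OF continuous_on_subset[OF cont subset_UNIV]]
    iterated_integral_eq_corners[OF dx dxy \<open>a \<le> b\<close> \<open>c \<le> d\<close>]
  by simp

lemma mixed_partials_commute:
  fixes g gx gy gxy gyx :: "real \<Rightarrow> real \<Rightarrow> 'a::banach"
  assumes dx: "\<And>x y. ((\<lambda>t. g t y) has_vector_derivative gx x y) (at x)"
    and dy: "\<And>x y. ((\<lambda>t. g x t) has_vector_derivative gy x y) (at y)"
    and dxy: "\<And>x y. ((\<lambda>t. gx x t) has_vector_derivative gxy x y) (at y)"
    and dyx: "\<And>x y. ((\<lambda>t. gy t y) has_vector_derivative gyx x y) (at x)"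
    and c1: "continuous_on UNIV (\<lambda>z. gxy (fst z) (snd z))"
    and c2: "continuous_on UNIV (\<lambda>z. gyx (fst z) (snd z))"
  shows "gxy x y = gyx x y"
proof -
  let ?D = "\<lambda>z. gxy (fst z) (snd z) - gyx (fst z) (snd z)"
  have "integral (cbox (a, c) (b, d)) ?D = 0" if "a \<le> b" "c \<le> d" for a b c d
  proof -
    have "integral (cbox (a, c) (b, d)) (\<lambda>z. gyx (fst z) (snd z))
        = integral (cbox a b) (\<lambda>x. integral (cbox c d) (\<lambda>y. gyx x y))"
      using integral_prod_continuous[OF continuous_on_subset[OF c2 subset_UNIV]] by simp
    also have "\<dots> = integral (cbox c d) (\<lambda>y. integral (cbox a b) (\<lambda>x. gyx x y))"
      by (rule integral_swap_continuous)
         (use continuous_on_subset[OF c2 subset_UNIV] in \<open>simp add: case_prod_beta'\<close>)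
    also have "\<dots> = g b d - g b c - g a d + g a c"
      using iterated_integral_eq_corners[of "\<lambda>y x. g x y" "\<lambda>y x. gy x y" "\<lambda>y x. gyx x y",
          OF dy dyx that(2,1)] by simp
    finally have "integral (cbox (a, c) (b, d)) (\<lambda>z. gyx (fst z) (snd z)) = \<dots>" .
    then show ?thesis
      using box_integral_eq_corners[OF dx dxy c1 that]
        integral_diff[OF integrable_continuous integrable_continuous,
          OF continuous_on_subset[OF c1 subset_UNIV] continuous_on_subset[OF c2 subset_UNIV]]
      by simp
  qed
  moreover have "continuous_on UNIV ?D"
    by (intro continuous_on_diff c1 c2)
  ultimately have "?D (x, y) = 0"
    by (rule continuous_eq_0_if_box_integrals_eq_0[rotated])
  then show ?thesis by simp
qed

lemma integral_sphere_box_cong: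
  assumes "\<And>t p. 0 < t \<Longrightarrow> t < pi \<Longrightarrow> f (t, p) = g (t, p)"
  shows "integral (cbox (0, 0) (pi, 2 * pi)) f = integral (cbox (0, 0) (pi, 2 * pi)) g"
proof (rule integral_spike[where S = "{z. fst z = 0} \<union> {z. fst z = pi}"])
  have "{z :: real \<times> real. fst z = a} = {z. (1, 0) \<bullet> z = a}" for a
    by (auto simp: inner_Pair)
  moreover have "negligible {z :: real \<times> real. (1, 0) \<bullet> z = a}" for a
    by (rule negligible_hyperplane) (simp add: zero_prod_def)
  ultimately show "negligible ({z :: real \<times> real. fst z = 0} \<union> {z. fst z = pi})"
    by (metis negligible_Un)
next
  fix z assume "z \<in> cbox (0, 0) (pi, 2 * pi) - ({z. fst z = 0} \<union> {z. fst z = pi})"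
  then show "g z = f z"
    using assms[of "fst z" "snd z"] by (auto simp: cbox_Pair_eq less_eq_real_def)
qed

section \<open>Smooth ambient functions and the moving frame\<close>

lemma iterD_pd: "iterD is (pd i G) = iterD (is @ [i]) G"
  by (induction "is") auto

lemma smooth3_differentiable: "smooth3 G \<Longrightarrow> G differentiable (at x)"
  unfolding smooth3_def by (metis iterD.simps(1))

lemma smooth3_pd: "smooth3 G \<Longrightarrow> smooth3 (pd i G)"
  unfolding smooth3_def by (simp add: iterD_pd)

lemma smooth3_continuous_on: "smooth3 G \<Longrightarrow> continuous_on S G"
  by (meson continuous_at_imp_continuous_on differentiable_imp_continuous_within
      smooth3_differentiable)

definition grad3 :: "(real^3 \<Rightarrow> complex) \<Rightarrow> 3 \<Rightarrow> real^3 \<Rightarrow> complex" where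
  "grad3 G i = pd i G"

lemma smooth3_grad3: "smooth3 G \<Longrightarrow> smooth3 (grad3 G i)"
  by (simp add: grad3_def smooth3_pd)

lemma vec3_eq_sum_axis:
  "(y::real^3) = (y$1) *\<^sub>R axis 1 1 + (y$2) *\<^sub>R axis 2 1 + (y$3) *\<^sub>R axis 3 1"
  by (simp add: vec_eq_iff forall_3 axis_def)

lemma frechet_derivative_eq_sum_grad3:
  assumes "G differentiable (at x)"
  shows "frechet_derivative G (at x) y = (\<Sum>i\<in>UNIV. grad3 G i x * of_real (y$i))"
proof -
  have lin: "linear (frechet_derivative G (at x))"
    using assms frechet_derivative_works has_derivative_linear by blast
  have "frechet_derivative G (at x) y
      = frechet_derivative G (at x) ((y$1) *\<^sub>R axis 1 1 + (y$2) *\<^sub>R axis 2 1 + (y$3) *\<^sub>R axis 3 1)"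
    using vec3_eq_sum_axis[of y] by simp
  also have "\<dots> = (y$1) *\<^sub>R pd 1 G x + (y$2) *\<^sub>R pd 2 G x + (y$3) *\<^sub>R pd 3 G x"
    by (simp add: linear_add[OF lin] linear_scale[OF lin] pd_def)
  finally show ?thesis
    by (simp add: sum_3 scaleR_conv_of_real mult.commute grad3_def)
qed

lemma has_vector_derivative_compose_smooth3:
  assumes "smooth3 G" and "(\<gamma> has_vector_derivative \<gamma>') (at t)"
  shows "((\<lambda>t. G (\<gamma> t)) has_vector_derivative
           (\<Sum>i\<in>UNIV. grad3 G i (\<gamma> t) * of_real (\<gamma>' $ i))) (at t)"
proof -
  have G: "G differentiable (at (\<gamma> t))"
    using assms(1) by (rule smooth3_differentiable)
  have "(G has_derivative frechet_derivative G (at (\<gamma> t))) (at (\<gamma> t) within range \<gamma>)"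
    using G frechet_derivative_works has_derivative_at_withinI by blast
  then have "((G \<circ> \<gamma>) has_vector_derivative frechet_derivative G (at (\<gamma> t)) \<gamma>') (at t within UNIV)"
    by (intro vector_derivative_diff_chain_within) (use assms(2) in simp_all)
  then show ?thesis
    by (simp add: frechet_derivative_eq_sum_grad3[OF G] o_def)
qed

lemma has_vector_derivative_of_real_nth:
  "(\<gamma> has_vector_derivative \<gamma>') (at t) \<Longrightarrow>
   ((\<lambda>t. complex_of_real (\<gamma> t $ i)) has_vector_derivative of_real (\<gamma>' $ i)) (at t)"
  by (rule has_vector_derivative_of_real)
     (simp add: has_real_derivative_iff_has_vector_derivative
        bounded_linear.has_vector_derivative[OF bounded_linear_vec_nth])

definition eph_unit :: "real \<Rightarrow> real^3" where
  "eph_unit p = vector [- sin p, cos p, 0]"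

definition eph_unit' :: "real \<Rightarrow> real^3" where
  "eph_unit' p = vector [- cos p, - sin p, 0]"

lemma sph_axis:
  "sph t p = (sin t * cos p) *\<^sub>R axis 1 1 + (sin t * sin p) *\<^sub>R axis 2 1 + cos t *\<^sub>R axis 3 1"
  by (simp add: vec_eq_iff forall_3 axis_def sph_def)

lemma eth_axis:
  "eth t p = (cos t * cos p) *\<^sub>R axis 1 1 + (cos t * sin p) *\<^sub>R axis 2 1 + (- sin t) *\<^sub>R axis 3 1"
  by (simp add: vec_eq_iff forall_3 axis_def eth_def)

lemma eph_unit_axis: "eph_unit p = (- sin p) *\<^sub>R axis 1 1 + cos p *\<^sub>R axis 2 1"
  by (simp add: vec_eq_iff forall_3 axis_def eph_unit_def)

lemma eph_unit'_axis: "eph_unit' p = (- cos p) *\<^sub>R axis 1 1 + (- sin p) *\<^sub>R axis 2 1"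
  by (simp add: vec_eq_iff forall_3 axis_def eph_unit'_def)

lemma sph_has_dth: "((\<lambda>t. sph t p) has_vector_derivative eth t p) (at t)"
  unfolding sph_axis eth_axis by (auto intro!: derivative_eq_intros simp: algebra_simps)

lemma sph_has_dph: "((\<lambda>p. sph t p) has_vector_derivative sin t *\<^sub>R eph_unit p) (at p)"
  unfolding sph_axis eph_unit_axis by (auto intro!: derivative_eq_intros simp: algebra_simps)

lemma eth_has_dth: "((\<lambda>t. eth t p) has_vector_derivative - sph t p) (at t)"
  unfolding sph_axis eth_axis by (auto intro!: derivative_eq_intros simp: algebra_simps)

lemma eth_has_dph: "((\<lambda>p. eth t p) has_vector_derivative cos t *\<^sub>R eph_unit p) (at p)"
  unfolding eph_unit_axis eth_axis by (auto intro!: derivative_eq_intros simp: algebra_simps)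

lemma eph_unit_has_derivative: "(eph_unit has_vector_derivative eph_unit' p) (at p)"
  unfolding eph_unit_axis[abs_def] eph_unit'_axis by (auto intro!: derivative_eq_intros)

lemma sum_mult_nth_eq_inner:
  fixes u v e :: "real^3" and W :: "3 \<Rightarrow> complex"
  assumes "\<And>i. W i = a * of_real (u $ i) + b * of_real (v $ i)"
  shows "(\<Sum>i\<in>UNIV. W i * of_real (e $ i)) = a * of_real (u \<bullet> e) + b * of_real (v \<bullet> e)"
  by (simp add: assms inner_vec_def sum_3 algebra_simps)

lemma inner_eth_eth: "eth t p \<bullet> eth t p = 1"
  unfolding eth_def inner_vec_def
  by (simp add: sum_3) (use sin_cos_squared_add[of t] sin_cos_squared_add[of p] in algebra)

lemma inner_eph_eth: "eph t p \<bullet> eth t p = 0"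
  by (simp add: eth_def eph_def inner_vec_def sum_3 algebra_simps)

lemma inner_eth_eph_unit: "eth t p \<bullet> eph_unit p = 0"
  by (simp add: eth_def eph_unit_def inner_vec_def sum_3 algebra_simps)

lemma inner_eph_eph_unit: "eph t p \<bullet> eph_unit p = sin t"
  unfolding eph_def eph_unit_def inner_vec_def
  by (simp add: sum_3) (use sin_cos_squared_add[of p] in algebra)

(* Components along eth and along the unit vector eph_unit = eph / sin t.  Unlike the
   coordinate components of a vector field they are smooth on the whole (t, p)-plane,
   poles included. *)
definition th_comp :: "(3 \<Rightarrow> real^3 \<Rightarrow> complex) \<Rightarrow> real \<Rightarrow> real \<Rightarrow> complex" where
  "th_comp W t p = (\<Sum>i\<in>UNIV. W i (sph t p) * of_real (eth t p $ i))"

definition ph_comp :: "(3 \<Rightarrow> real^3 \<Rightarrow> complex) \<Rightarrow> real \<Rightarrow> real \<Rightarrow> complex" where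
  "ph_comp W t p = (\<Sum>i\<in>UNIV. W i (sph t p) * of_real (eph_unit p $ i))"

definition th_comp_dth :: "(3 \<Rightarrow> real^3 \<Rightarrow> complex) \<Rightarrow> real \<Rightarrow> real \<Rightarrow> complex" where
  "th_comp_dth W t p = (\<Sum>i\<in>UNIV. th_comp (grad3 (W i)) t p * of_real (eth t p $ i)
                                   - W i (sph t p) * of_real (sph t p $ i))"

definition th_comp_dph :: "(3 \<Rightarrow> real^3 \<Rightarrow> complex) \<Rightarrow> real \<Rightarrow> real \<Rightarrow> complex" where
  "th_comp_dph W t p = (\<Sum>i\<in>UNIV. of_real (sin t) * ph_comp (grad3 (W i)) t p * of_real (eth t p $ i)
                                   + W i (sph t p) * of_real (cos t * eph_unit p $ i))"

definition ph_comp_dth :: "(3 \<Rightarrow> real^3 \<Rightarrow> complex) \<Rightarrow> real \<Rightarrow> real \<Rightarrow> complex" where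
  "ph_comp_dth W t p = (\<Sum>i\<in>UNIV. th_comp (grad3 (W i)) t p * of_real (eph_unit p $ i))"

definition ph_comp_dph :: "(3 \<Rightarrow> real^3 \<Rightarrow> complex) \<Rightarrow> real \<Rightarrow> real \<Rightarrow> complex" where
  "ph_comp_dph W t p = (\<Sum>i\<in>UNIV. of_real (sin t) * ph_comp (grad3 (W i)) t p * of_real (eph_unit p $ i)
                                   + W i (sph t p) * of_real (eph_unit' p $ i))"

lemma pullback_has_dth:
  "smooth3 G \<Longrightarrow> ((\<lambda>t. G (sph t p)) has_vector_derivative th_comp (grad3 G) t p) (at t)"
  unfolding th_comp_def by (rule has_vector_derivative_compose_smooth3[OF _ sph_has_dth])

lemma pullback_has_dph:
  "smooth3 G \<Longrightarrow>
   ((\<lambda>p. G (sph t p)) has_vector_derivative of_real (sin t) * ph_comp (grad3 G) t p) (at p)"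
  unfolding ph_comp_def sum_distrib_left
  by (rule has_vector_derivative_eq_rhs[OF has_vector_derivative_compose_smooth3[OF _ sph_has_dph]])
     (simp_all add: mult_ac)

lemma th_comp_has_dth:
  "(\<And>i. smooth3 (W i)) \<Longrightarrow> ((\<lambda>t. th_comp W t p) has_vector_derivative th_comp_dth W t p) (at t)"
  unfolding th_comp_def[of W] th_comp_dth_def
  by (intro has_vector_derivative_sum has_vector_derivative_eq_rhs[OF has_vector_derivative_mult[OF
        pullback_has_dth has_vector_derivative_of_real_nth[OF eth_has_dth]]])
     (auto simp: algebra_simps)

lemma th_comp_has_dph:
  "(\<And>i. smooth3 (W i)) \<Longrightarrow> ((\<lambda>p. th_comp W t p) has_vector_derivative th_comp_dph W t p) (at p)"
  unfolding th_comp_def[of W] th_comp_dph_def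
  by (intro has_vector_derivative_sum has_vector_derivative_eq_rhs[OF has_vector_derivative_mult[OF
        pullback_has_dph has_vector_derivative_of_real_nth[OF eth_has_dph]]])
     (auto simp: algebra_simps)

lemma ph_comp_has_dth:
  "(\<And>i. smooth3 (W i)) \<Longrightarrow> ((\<lambda>t. ph_comp W t p) has_vector_derivative ph_comp_dth W t p) (at t)"
  unfolding ph_comp_def[of W] ph_comp_dth_def
  by (intro has_vector_derivative_sum has_vector_derivative_eq_rhs[OF
        has_vector_derivative_mult_left[OF pullback_has_dth]])
     (auto simp: algebra_simps)

lemma ph_comp_has_dph:
  "(\<And>i. smooth3 (W i)) \<Longrightarrow> ((\<lambda>p. ph_comp W t p) has_vector_derivative ph_comp_dph W t p) (at p)"
  unfolding ph_comp_def[of W] ph_comp_dph_def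
  by (intro has_vector_derivative_sum has_vector_derivative_eq_rhs[OF has_vector_derivative_mult[OF
        pullback_has_dph has_vector_derivative_of_real_nth[OF eph_unit_has_derivative]]])
     (auto simp: algebra_simps)

lemma continuous_on_sph [continuous_intros]:
  "continuous_on S (\<lambda>z::real\<times>real. sph (fst z) (snd z))"
  unfolding sph_axis by (intro continuous_intros)

lemma continuous_on_sph_nth [continuous_intros]:
  "continuous_on S (\<lambda>z::real\<times>real. sph (fst z) (snd z) $ i)"
  by (intro continuous_intros)

lemma continuous_on_eth_nth [continuous_intros]:
  "continuous_on S (\<lambda>z::real\<times>real. eth (fst z) (snd z) $ i)"
  unfolding eth_axis by (intro continuous_intros)

lemma continuous_on_eph_unit_nth [continuous_intros]:
  "continuous_on S (\<lambda>z::real\<times>real. eph_unit (snd z) $ i)"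
  unfolding eph_unit_axis by (intro continuous_intros)

lemma continuous_on_eph_unit'_nth [continuous_intros]:
  "continuous_on S (\<lambda>z::real\<times>real. eph_unit' (snd z) $ i)"
  unfolding eph_unit'_axis by (intro continuous_intros)

lemma continuous_on_pullback [continuous_intros]:
  "smooth3 G \<Longrightarrow> continuous_on S (\<lambda>z::real\<times>real. G (sph (fst z) (snd z)))"
  by (rule continuous_on_compose2[OF smooth3_continuous_on continuous_on_sph]) auto

lemma continuous_on_th_comp [continuous_intros]:
  "(\<And>i. smooth3 (W i)) \<Longrightarrow> continuous_on S (\<lambda>z::real\<times>real. th_comp W (fst z) (snd z))"
  unfolding th_comp_def by (intro continuous_intros)

lemma continuous_on_ph_comp [continuous_intros]:
  "(\<And>i. smooth3 (W i)) \<Longrightarrow> continuous_on S (\<lambda>z::real\<times>real. ph_comp W (fst z) (snd z))"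
  unfolding ph_comp_def by (intro continuous_intros)

lemma continuous_on_th_comp_dth [continuous_intros]:
  "(\<And>i. smooth3 (W i)) \<Longrightarrow> continuous_on S (\<lambda>z::real\<times>real. th_comp_dth W (fst z) (snd z))"
  unfolding th_comp_dth_def by (intro continuous_intros smooth3_grad3)

lemma continuous_on_th_comp_dph [continuous_intros]:
  "(\<And>i. smooth3 (W i)) \<Longrightarrow> continuous_on S (\<lambda>z::real\<times>real. th_comp_dph W (fst z) (snd z))"
  unfolding th_comp_dph_def by (intro continuous_intros smooth3_grad3)

lemma continuous_on_ph_comp_dth [continuous_intros]:
  "(\<And>i. smooth3 (W i)) \<Longrightarrow> continuous_on S (\<lambda>z::real\<times>real. ph_comp_dth W (fst z) (snd z))"
  unfolding ph_comp_dth_def by (intro continuous_intros smooth3_grad3)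

lemma continuous_on_ph_comp_dph [continuous_intros]:
  "(\<And>i. smooth3 (W i)) \<Longrightarrow> continuous_on S (\<lambda>z::real\<times>real. ph_comp_dph W (fst z) (snd z))"
  unfolding ph_comp_dph_def by (intro continuous_intros smooth3_grad3)

(* Clairaut for G (sph t p): both sides are the mixed second derivative in t and p. *)
lemma th_comp_dph_grad3:
  assumes G: "smooth3 G"
  shows "th_comp_dph (grad3 G) t p
       = of_real (cos t) * ph_comp (grad3 G) t p + of_real (sin t) * ph_comp_dth (grad3 G) t p"
proof (rule mixed_partials_commute[where g = "\<lambda>t p. G (sph t p)" and gx = "th_comp (grad3 G)"
      and gy = "\<lambda>t p. of_real (sin t) * ph_comp (grad3 G) t p"])
  have W: "\<And>i. smooth3 (grad3 G i)" using G by (rule smooth3_grad3)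
  show "((\<lambda>s. of_real (sin s) * ph_comp (grad3 G) s p') has_vector_derivative
      of_real (cos t') * ph_comp (grad3 G) t' p' + of_real (sin t') * ph_comp_dth (grad3 G) t' p') (at t')"
    for t' p'
    by (rule has_vector_derivative_eq_rhs[OF has_vector_derivative_mult[OF
          has_vector_derivative_of_real[OF DERIV_sin] ph_comp_has_dth[OF W]]])
       (simp add: algebra_simps)
  show "continuous_on UNIV (\<lambda>z::real \<times> real. th_comp_dph (grad3 G) (fst z) (snd z))"
    and "continuous_on UNIV (\<lambda>z::real \<times> real. of_real (cos (fst z)) * ph_comp (grad3 G) (fst z) (snd z)
           + of_real (sin (fst z)) * ph_comp_dth (grad3 G) (fst z) (snd z))"
    by (intro continuous_intros W)+
qed (use G in \<open>simp_all add: pullback_has_dth pullback_has_dph th_comp_has_dph smooth3_grad3\<close>)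

lemma dth_eqI: "((\<lambda>t. g t p) has_vector_derivative d) (at t) \<Longrightarrow> dth g t p = d"
  by (simp add: dth_def vector_derivative_at)

lemma dph_eqI: "((\<lambda>p. g t p) has_vector_derivative d) (at p) \<Longrightarrow> dph g t p = d"
  by (simp add: dph_def vector_derivative_at)

lemma sin_nonzero_in_chart: "0 < t \<Longrightarrow> t < pi \<Longrightarrow> sin t \<noteq> 0"
  using sin_gt_zero by force

lemma has_vector_derivative_divide_sin:
  fixes q :: "real \<Rightarrow> complex"
  assumes "(q has_vector_derivative q') (at t)" and "sin t \<noteq> 0"
  shows "((\<lambda>t. q t / of_real (sin t)) has_vector_derivative
           (q' * of_real (sin t) - q t * of_real (cos t)) / of_real (sin t)^2) (at t)"
proof -
  have d: "((\<lambda>t. inverse (sin t)) has_real_derivative - (cos t * inverse (sin t ^ 2))) (at t)"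
    using DERIV_inverse_fun[OF DERIV_sin assms(2)] by (simp add: numeral_2_eq_2)
  have "((\<lambda>t. q t * of_real (inverse (sin t))) has_vector_derivative
      q t * of_real (- (cos t * inverse (sin t ^ 2))) + q' * of_real (inverse (sin t))) (at t)"
    by (rule has_vector_derivative_mult[OF assms(1) has_vector_derivative_of_real[OF d]])
  moreover have "q t * of_real (- (cos t * inverse (sin t ^ 2))) + q' * of_real (inverse (sin t))
      = (q' * of_real (sin t) - q t * of_real (cos t)) / of_real (sin t)^2"
    using assms(2) by (simp add: field_simps eval_nat_numeral)
  ultimately show ?thesis
    by (simp add: divide_inverse)
qed

lemma dth_pb: "smooth3 G \<Longrightarrow> dth (pb G) t p = th_comp (grad3 G) t p"
  unfolding pb_def by (rule dth_eqI[OF pullback_has_dth])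

lemma dph_pb: "smooth3 G \<Longrightarrow> dph (pb G) t p = of_real (sin t) * ph_comp (grad3 G) t p"
  unfolding pb_def by (rule dph_eqI[OF pullback_has_dph])

lemma fst_sgrad: "smooth3 G \<Longrightarrow> sin t \<noteq> 0 \<Longrightarrow> fst (sgrad G) t p = ph_comp (grad3 G) t p"
  by (simp add: sgrad_def dph_pb)

lemma snd_sgrad: "smooth3 G \<Longrightarrow> snd (sgrad G) t p = - th_comp (grad3 G) t p / of_real (sin t)"
  by (simp add: sgrad_def dth_pb)

lemma dth_fst_sgrad:
  assumes G: "smooth3 G" and t: "0 < t" "t < pi"
  shows "dth (fst (sgrad G)) t p = ph_comp_dth (grad3 G) t p"
proof (rule dth_eqI, rule has_vector_derivative_transform_within_open[OF
      ph_comp_has_dth[OF smooth3_grad3[OF G]], of "{0<..<pi}"])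
  show "\<And>s. s \<in> {0<..<pi} \<Longrightarrow> ph_comp (grad3 G) s p = fst (sgrad G) s p"
    using fst_sgrad[OF G] sin_nonzero_in_chart by auto
qed (use t in auto)

lemma dph_fst_sgrad:
  assumes G: "smooth3 G" and t: "0 < t" "t < pi"
  shows "dph (fst (sgrad G)) t p = ph_comp_dph (grad3 G) t p"
proof -
  have "(\<lambda>p. fst (sgrad G) t p) = (\<lambda>p. ph_comp (grad3 G) t p)"
    using fst_sgrad[OF G sin_nonzero_in_chart[OF t]] by auto
  then show ?thesis
    using ph_comp_has_dph[OF smooth3_grad3[OF G]] by (simp add: dph_def vector_derivative_at)
qed

lemma dth_snd_sgrad:
  assumes G: "smooth3 G" and t: "0 < t" "t < pi"
  shows "dth (snd (sgrad G)) t p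
       = - ((th_comp_dth (grad3 G) t p * of_real (sin t) - th_comp (grad3 G) t p * of_real (cos t))
            / of_real (sin t)^2)"
  unfolding snd_sgrad[OF G, abs_def] minus_divide_left[symmetric]
  by (intro dth_eqI has_vector_derivative_minus has_vector_derivative_divide_sin
        th_comp_has_dth smooth3_grad3 G sin_nonzero_in_chart t)

lemma dph_snd_sgrad:
  assumes G: "smooth3 G"
  shows "dph (snd (sgrad G)) t p = - (th_comp_dph (grad3 G) t p / of_real (sin t))"
  unfolding snd_sgrad[OF G, abs_def] minus_divide_left[symmetric]
  by (intro dph_eqI has_vector_derivative_minus has_vector_derivative_divide
        th_comp_has_dph smooth3_grad3 G)

lemma LB_pb_eq:
  assumes G: "smooth3 G"
  shows "LB (pb G) t p
       = (of_real (cos t) * th_comp (grad3 G) t p + of_real (sin t) * th_comp_dth (grad3 G) t p)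
           / of_real (sin t) + of_real (sin t) * ph_comp_dph (grad3 G) t p / of_real ((sin t)\<^sup>2)"
proof -
  have "dth (\<lambda>t p. of_real (sin t) * dth (pb G) t p) t p
      = of_real (cos t) * th_comp (grad3 G) t p + of_real (sin t) * th_comp_dth (grad3 G) t p"
    unfolding dth_pb[OF G]
    by (rule dth_eqI, rule has_vector_derivative_eq_rhs[OF has_vector_derivative_mult[OF
          has_vector_derivative_of_real[OF DERIV_sin] th_comp_has_dth[OF smooth3_grad3[OF G]]]])
       (simp add: algebra_simps)
  moreover have "dph (dph (pb G)) t p = of_real (sin t) * ph_comp_dph (grad3 G) t p"
    unfolding dph_pb[OF G, abs_def]
    by (intro dph_eqI derivative_intros ph_comp_has_dph smooth3_grad3 G)
  ultimately show ?thesis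
    unfolding LB_def by simp
qed

lemma ph_comp_dph_eigen:
  assumes G: "smooth3 G" and t: "0 < t" "t < pi"
    and eigen: "LB (pb G) t p = - lam * pb G t p"
  shows "ph_comp_dph (grad3 G) t p
       = - (lam * of_real (sin t) * G (sph t p)) - of_real (cos t) * th_comp (grad3 G) t p
         - of_real (sin t) * th_comp_dth (grad3 G) t p"
proof -
  have s: "complex_of_real (sin t) \<noteq> 0"
    using sin_nonzero_in_chart[OF t] by simp
  have "(of_real (cos t) * th_comp (grad3 G) t p + of_real (sin t) * th_comp_dth (grad3 G) t p
          + ph_comp_dph (grad3 G) t p) / of_real (sin t) = - lam * G (sph t p)"
    using eigen s unfolding LB_pb_eq[OF G] pb_def of_real_power
    by (simp add: power2_eq_square add_divide_distrib)
  then show ?thesis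
    using s by (simp add: divide_eq_eq algebra_simps)
qed

locale ambient_field =
  fixes w :: vf and V :: "3 \<Rightarrow> real^3 \<Rightarrow> complex"
  assumes smooth: "\<And>i. smooth3 (V i)"
    and represents: "\<And>t p i. 0 < t \<Longrightarrow> t < pi \<Longrightarrow>
      V i (sph t p) = fst w t p * of_real (eth t p $ i) + snd w t p * of_real (eph t p $ i)"
begin

lemma fst_eq_th_comp:
  assumes "0 < t" "t < pi"
  shows "fst w t p = th_comp V t p"
  unfolding th_comp_def
  by (subst sum_mult_nth_eq_inner[OF represents[OF assms]])
     (simp add: inner_eth_eth inner_eph_eth)

lemma snd_eq_ph_comp:
  assumes "0 < t" "t < pi"
  shows "snd w t p = ph_comp V t p / of_real (sin t)"
  unfolding ph_comp_def
  by (subst sum_mult_nth_eq_inner[OF represents[OF assms]])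
     (simp add: inner_eth_eph_unit inner_eph_eph_unit sin_nonzero_in_chart[OF assms])

lemma dth_fst:
  assumes "0 < t" "t < pi"
  shows "dth (fst w) t p = th_comp_dth V t p"
proof (rule dth_eqI, rule has_vector_derivative_transform_within_open[OF
      th_comp_has_dth[OF smooth], of "{0<..<pi}"])
  show "\<And>s. s \<in> {0<..<pi} \<Longrightarrow> th_comp V s p = fst w s p"
    using fst_eq_th_comp by auto
qed (use assms in auto)

lemma dph_fst:
  assumes "0 < t" "t < pi"
  shows "dph (fst w) t p = th_comp_dph V t p"
proof -
  have "(\<lambda>p. fst w t p) = (\<lambda>p. th_comp V t p)"
    using fst_eq_th_comp[OF assms] by auto
  then show ?thesis
    using th_comp_has_dph[OF smooth] by (simp add: dph_def vector_derivative_at)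
qed

lemma dth_snd:
  assumes "0 < t" "t < pi"
  shows "dth (snd w) t p
       = (ph_comp_dth V t p * of_real (sin t) - ph_comp V t p * of_real (cos t)) / of_real (sin t)^2"
proof (rule dth_eqI, rule has_vector_derivative_transform_within_open[OF
      has_vector_derivative_divide_sin[OF ph_comp_has_dth[OF smooth] sin_nonzero_in_chart[OF assms]],
      of "{0<..<pi}"])
  show "\<And>s. s \<in> {0<..<pi} \<Longrightarrow> ph_comp V s p / of_real (sin s) = snd w s p"
    using snd_eq_ph_comp by auto
qed (use assms in auto)

lemma dph_snd:
  assumes "0 < t" "t < pi"
  shows "dph (snd w) t p = ph_comp_dph V t p / of_real (sin t)"
proof -
  have "(\<lambda>p. snd w t p) = (\<lambda>p. ph_comp V t p / of_real (sin t))"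
    using snd_eq_ph_comp[OF assms] by auto
  then show ?thesis
    using has_vector_derivative_divide[OF ph_comp_has_dph[OF smooth]]
    by (simp add: dph_def vector_derivative_at)
qed

lemma ph_comp_dph_divergence_free:
  assumes t: "0 < t" "t < pi" and div: "divg w t p = 0"
  shows "ph_comp_dph V t p = - (of_real (cos t) * th_comp V t p) - of_real (sin t) * th_comp_dth V t p"
proof -
  have "dth (\<lambda>t p. of_real (sin t) * fst w t p) t p
      = of_real (cos t) * th_comp V t p + of_real (sin t) * th_comp_dth V t p"
  proof (rule dth_eqI, rule has_vector_derivative_transform_within_open[of
        "\<lambda>t. of_real (sin t) * th_comp V t p" _ _ "{0<..<pi}"])
    show "((\<lambda>t. complex_of_real (sin t) * th_comp V t p) has_vector_derivative
        complex_of_real (cos t) * th_comp V t p + complex_of_real (sin t) * th_comp_dth V t p) (at t)"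
      by (rule has_vector_derivative_eq_rhs[OF has_vector_derivative_mult[OF
            has_vector_derivative_of_real[OF DERIV_sin] th_comp_has_dth[OF smooth]]])
         (simp add: algebra_simps)
    show "\<And>s. s \<in> {0<..<pi} \<Longrightarrow> of_real (sin s) * th_comp V s p = of_real (sin s) * fst w s p"
      using fst_eq_th_comp by auto
  qed (use t in auto)
  then have "(of_real (cos t) * th_comp V t p + of_real (sin t) * th_comp_dth V t p
               + ph_comp_dph V t p) / of_real (sin t) = 0"
    using div unfolding divg_def dph_snd[OF t] by (simp add: add_divide_distrib)
  then have "ph_comp_dph V t p + (of_real (cos t) * th_comp V t p + of_real (sin t) * th_comp_dth V t p) = 0"
    using sin_nonzero_in_chart[OF t] by (simp add: algebra_simps)
  then show ?thesis
    by algebra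
qed

end

section \<open>The integrand as a divergence\<close>

definition pairing_density ::
  "(real^3 \<Rightarrow> complex) \<Rightarrow> (real^3 \<Rightarrow> complex) \<Rightarrow> (3 \<Rightarrow> real^3 \<Rightarrow> complex)
    \<Rightarrow> real \<Rightarrow> real \<Rightarrow> complex"
where
  "pairing_density F H V t p =
    (let c = of_real (cos t); s = of_real (sin t);
         A = th_comp V t p; At = th_comp_dth V t p; Ap = th_comp_dph V t p;
         B = ph_comp V t p; Bt = ph_comp_dth V t p; Bp = ph_comp_dph V t p;
         ft = th_comp (grad3 F) t p; fe = ph_comp (grad3 F) t p;
         ht = th_comp (grad3 H) t p; he = ph_comp (grad3 H) t p;
         htt = th_comp_dth (grad3 H) t p; htp = th_comp_dph (grad3 H) t p;
         het = ph_comp_dth (grad3 H) t p; hep = ph_comp_dph (grad3 H) t p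
     in fe * (s * (At * he - A * het) - Ap * ht - B * hep)
        + ft * (c * (A * ht + B * he) - s * (A * htt + Bt * he) - B * htp + Bp * ht))"

lemma (in ambient_field) gmet_sgrad_bracket_eq:
  assumes F: "smooth3 F" and H: "smooth3 H" and t: "0 < t" "t < pi"
  shows "gmet (sgrad F) (bracket (sgrad H) w) t p * of_real (sin t) = pairing_density F H V t p"
proof -
  have s: "complex_of_real (sin t) \<noteq> 0"
    using sin_nonzero_in_chart[OF t] by simp
  show ?thesis
    unfolding gmet_def bracket_def fst_conv snd_conv of_real_power
      fst_sgrad[OF F sin_nonzero_in_chart[OF t]] snd_sgrad[OF F]
      fst_sgrad[OF H sin_nonzero_in_chart[OF t]] snd_sgrad[OF H]
      dth_fst_sgrad[OF H t] dph_fst_sgrad[OF H t] dth_snd_sgrad[OF H t] dph_snd_sgrad[OF H]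
      fst_eq_th_comp[OF t] snd_eq_ph_comp[OF t] dth_fst[OF t] dph_fst[OF t] dth_snd[OF t] dph_snd[OF t]
      pairing_density_def Let_def
    using s by (simp add: field_simps power2_eq_square)
qed

(* flux_th = - sin t X_th and flux_ph = - (component of X along eph_unit) for the field
   X = kap w(h) grad f + lam w(f) grad h + kap lam f h w, so that
   flux_th_dth + flux_ph_dph = - sin t div X. *)
definition flux_th ::
  "complex \<Rightarrow> complex \<Rightarrow> (real^3 \<Rightarrow> complex) \<Rightarrow> (real^3 \<Rightarrow> complex) \<Rightarrow> (3 \<Rightarrow> real^3 \<Rightarrow> complex)
    \<Rightarrow> real \<Rightarrow> real \<Rightarrow> complex"
where
  "flux_th kap lam F H V t p =
    (let s = of_real (sin t); A = th_comp V t p; B = ph_comp V t p;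
         f = F (sph t p); ft = th_comp (grad3 F) t p; fe = ph_comp (grad3 F) t p;
         h = H (sph t p); ht = th_comp (grad3 H) t p; he = ph_comp (grad3 H) t p
     in - s * (kap * (A * ht + B * he) * ft + lam * (A * ft + B * fe) * ht + lam * kap * f * h * A))"

definition flux_ph ::
  "complex \<Rightarrow> complex \<Rightarrow> (real^3 \<Rightarrow> complex) \<Rightarrow> (real^3 \<Rightarrow> complex) \<Rightarrow> (3 \<Rightarrow> real^3 \<Rightarrow> complex)
    \<Rightarrow> real \<Rightarrow> real \<Rightarrow> complex"
where
  "flux_ph kap lam F H V t p =
    (let A = th_comp V t p; B = ph_comp V t p;
         f = F (sph t p); ft = th_comp (grad3 F) t p; fe = ph_comp (grad3 F) t p;
         h = H (sph t p); ht = th_comp (grad3 H) t p; he = ph_comp (grad3 H) t p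
     in - (kap * (A * ht + B * he) * fe + lam * (A * ft + B * fe) * he + lam * kap * f * h * B))"

definition flux_th_dth ::
  "complex \<Rightarrow> complex \<Rightarrow> (real^3 \<Rightarrow> complex) \<Rightarrow> (real^3 \<Rightarrow> complex) \<Rightarrow> (3 \<Rightarrow> real^3 \<Rightarrow> complex)
    \<Rightarrow> real \<Rightarrow> real \<Rightarrow> complex"
where
  "flux_th_dth kap lam F H V t p =
    (let c = of_real (cos t); s = of_real (sin t);
         A = th_comp V t p; At = th_comp_dth V t p; B = ph_comp V t p; Bt = ph_comp_dth V t p;
         f = F (sph t p); ft = th_comp (grad3 F) t p; fe = ph_comp (grad3 F) t p;
         ftt = th_comp_dth (grad3 F) t p; fet = ph_comp_dth (grad3 F) t p;
         h = H (sph t p); ht = th_comp (grad3 H) t p; he = ph_comp (grad3 H) t p;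
         htt = th_comp_dth (grad3 H) t p; het = ph_comp_dth (grad3 H) t p
     in - c * (kap * (A * ht + B * he) * ft + lam * (A * ft + B * fe) * ht + lam * kap * f * h * A)
        - s * (kap * ((At * ht + A * htt + Bt * he + B * het) * ft + (A * ht + B * he) * ftt)
               + lam * ((At * ft + A * ftt + Bt * fe + B * fet) * ht + (A * ft + B * fe) * htt)
               + lam * kap * (ft * h * A + f * ht * A + f * h * At)))"

definition flux_ph_dph ::
  "complex \<Rightarrow> complex \<Rightarrow> (real^3 \<Rightarrow> complex) \<Rightarrow> (real^3 \<Rightarrow> complex) \<Rightarrow> (3 \<Rightarrow> real^3 \<Rightarrow> complex)
    \<Rightarrow> real \<Rightarrow> real \<Rightarrow> complex"
where
  "flux_ph_dph kap lam F H V t p =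
    (let s = of_real (sin t);
         A = th_comp V t p; Ap = th_comp_dph V t p; B = ph_comp V t p; Bp = ph_comp_dph V t p;
         f = F (sph t p); ft = th_comp (grad3 F) t p; fe = ph_comp (grad3 F) t p;
         ftp = th_comp_dph (grad3 F) t p; fep = ph_comp_dph (grad3 F) t p;
         h = H (sph t p); ht = th_comp (grad3 H) t p; he = ph_comp (grad3 H) t p;
         htp = th_comp_dph (grad3 H) t p; hep = ph_comp_dph (grad3 H) t p
     in - (kap * ((Ap * ht + A * htp + Bp * he + B * hep) * fe + (A * ht + B * he) * fep)
           + lam * ((Ap * ft + A * ftp + Bp * fe + B * fep) * he + (A * ft + B * fe) * hep)
           + lam * kap * (s * fe * h * B + f * s * he * B + f * h * Bp)))"

lemma (in ambient_field) pairing_density_divergence_form: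
  assumes F: "smooth3 F" and H: "smooth3 H" and t: "0 < t" "t < pi"
    and eigen_F: "LB (pb F) t p = - lam * pb F t p"
    and eigen_H: "LB (pb H) t p = - kap * pb H t p"
    and div: "divg w t p = 0"
  shows "kap * pairing_density F H V t p + lam * pairing_density H F V t p
       = flux_th_dth kap lam F H V t p + flux_ph_dph kap lam F H V t p"
  unfolding pairing_density_def flux_th_dth_def flux_ph_dph_def Let_def
    th_comp_dph_grad3[OF F] th_comp_dph_grad3[OF H]
    ph_comp_dph_eigen[OF F t eigen_F] ph_comp_dph_eigen[OF H t eigen_H]
    ph_comp_dph_divergence_free[OF t div]
  by (simp add: algebra_simps)

context
  fixes F H :: "real^3 \<Rightarrow> complex" and V :: "3 \<Rightarrow> real^3 \<Rightarrow> complex"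
  assumes F: "smooth3 F" and H: "smooth3 H" and V: "\<And>i. smooth3 (V i)"
begin

lemma flux_th_has_dth:
  "((\<lambda>t. flux_th kap lam F H V t p) has_vector_derivative flux_th_dth kap lam F H V t p) (at t)"
  unfolding flux_th_def flux_th_dth_def Let_def
  by (auto intro!: derivative_eq_intros th_comp_has_dth ph_comp_has_dth pullback_has_dth
        smooth3_grad3 F H V simp: algebra_simps)

lemma flux_ph_has_dph:
  "((\<lambda>p. flux_ph kap lam F H V t p) has_vector_derivative flux_ph_dph kap lam F H V t p) (at p)"
  unfolding flux_ph_def flux_ph_dph_def Let_def
  by (auto intro!: derivative_eq_intros th_comp_has_dph ph_comp_has_dph pullback_has_dph
        smooth3_grad3 F H V simp: algebra_simps)

lemma continuous_on_flux_th_dth: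
  "continuous_on S (\<lambda>z::real \<times> real. flux_th_dth kap lam F H V (fst z) (snd z))"
  unfolding flux_th_dth_def Let_def by (intro continuous_intros smooth3_grad3 F H V)

lemma continuous_on_flux_ph_dph:
  "continuous_on S (\<lambda>z::real \<times> real. flux_ph_dph kap lam F H V (fst z) (snd z))"
  unfolding flux_ph_dph_def Let_def by (intro continuous_intros smooth3_grad3 F H V)

lemma continuous_on_pairing_density:
  "continuous_on S (\<lambda>z::real \<times> real. pairing_density F H V (fst z) (snd z))"
  unfolding pairing_density_def Let_def by (intro continuous_intros smooth3_grad3 F H V)

lemma integral_flux_th_dth:
  "integral (cbox (0, 0) (pi, 2 * pi)) (\<lambda>z. flux_th_dth kap lam F H V (fst z) (snd z)) = 0"
proof -
  note cont = continuous_on_flux_th_dth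
  have "integral (cbox (0, 0) (pi, 2 * pi)) (\<lambda>z. flux_th_dth kap lam F H V (fst z) (snd z))
      = integral (cbox 0 (2 * pi)) (\<lambda>p. integral (cbox 0 pi) (\<lambda>t. flux_th_dth kap lam F H V t p))"
    using integral_prod_continuous[OF cont]
      integral_swap_continuous[OF cont[unfolded case_prod_beta'[symmetric]]]
    by simp
  also have "\<dots> = integral {0..2 * pi} (\<lambda>p. flux_th kap lam F H V pi p - flux_th kap lam F H V 0 p)"
    using integral_eq_diff_of_has_vector_derivative[OF pi_ge_zero flux_th_has_dth] by simp
  also have "\<dots> = 0"
    by (simp add: flux_th_def)
  finally show ?thesis .
qed

lemma integral_flux_ph_dph:
  "integral (cbox (0, 0) (pi, 2 * pi)) (\<lambda>z. flux_ph_dph kap lam F H V (fst z) (snd z)) = 0"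
proof -
  have periodic: "flux_ph kap lam F H V t (2 * pi) = flux_ph kap lam F H V t 0" for t
    by (simp add: flux_ph_def th_comp_def ph_comp_def sph_def eth_def eph_unit_def)
  have "integral (cbox (0, 0) (pi, 2 * pi)) (\<lambda>z. flux_ph_dph kap lam F H V (fst z) (snd z))
      = integral {0..pi} (\<lambda>t. flux_ph kap lam F H V t (2 * pi) - flux_ph kap lam F H V t 0)"
    using integral_prod_continuous[OF continuous_on_flux_ph_dph]
      integral_eq_diff_of_has_vector_derivative[of 0 "2 * pi", OF _ flux_ph_has_dph]
    by simp
  also have "\<dots> = 0"
    by (simp add: periodic)
  finally show ?thesis .
qed

end

context ambient_field
begin

lemma ip_sgrad_bracket_eq:
  assumes "smooth3 F" and "smooth3 H"
  shows "ip (sgrad F) (bracket (sgrad H) w)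
       = integral (cbox (0, 0) (pi, 2 * pi)) (\<lambda>z. pairing_density F H V (fst z) (snd z))"
  unfolding ip_def
  by (rule integral_sphere_box_cong) (simp add: gmet_sgrad_bracket_eq[OF assms])

lemma weighted_pairings_cancel:
  assumes F: "smooth3 F" and H: "smooth3 H"
    and eigen_F: "\<And>t p. 0 < t \<Longrightarrow> t < pi \<Longrightarrow> LB (pb F) t p = - lam * pb F t p"
    and eigen_H: "\<And>t p. 0 < t \<Longrightarrow> t < pi \<Longrightarrow> LB (pb H) t p = - kap * pb H t p"
    and div: "\<And>t p. 0 < t \<Longrightarrow> t < pi \<Longrightarrow> divg w t p = 0"
  shows "kap * ip (sgrad F) (bracket (sgrad H) w) + lam * ip (sgrad H) (bracket (sgrad F) w) = 0"
proof -
  let ?\<Omega> = "cbox (0::real, 0::real) (pi, 2 * pi)"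
  have int_pairing: "(\<lambda>z. pairing_density G K V (fst z) (snd z)) integrable_on ?\<Omega>"
    if "smooth3 G" "smooth3 K" for G K
    by (intro integrable_continuous continuous_on_pairing_density that smooth)
  have int_flux: "(\<lambda>z. flux_th_dth kap lam F H V (fst z) (snd z)) integrable_on ?\<Omega>"
    "(\<lambda>z. flux_ph_dph kap lam F H V (fst z) (snd z)) integrable_on ?\<Omega>"
    by (intro integrable_continuous continuous_on_flux_th_dth continuous_on_flux_ph_dph F H smooth)+
  have "kap * ip (sgrad F) (bracket (sgrad H) w) + lam * ip (sgrad H) (bracket (sgrad F) w)
      = integral ?\<Omega> (\<lambda>z. kap * pairing_density F H V (fst z) (snd z)
                            + lam * pairing_density H F V (fst z) (snd z))"
    using int_pairing[OF F H] int_pairing[OF H F]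
    by (simp add: ip_sgrad_bracket_eq F H integral_add integrable_on_mult_right)
  also have "\<dots> = integral ?\<Omega> (\<lambda>z. flux_th_dth kap lam F H V (fst z) (snd z)
                                + flux_ph_dph kap lam F H V (fst z) (snd z))"
    by (rule integral_sphere_box_cong)
       (simp add: pairing_density_divergence_form F H eigen_F eigen_H div)
  also have "\<dots> = 0"
    using int_flux
    by (simp add: integral_add integral_flux_th_dth integral_flux_ph_dph F H smooth)
  finally show ?thesis .
qed

end

theorem lemma5:
  fixes l k :: nat and F H :: "real^3 \<Rightarrow> complex"
  assumes "l \<ge> 1" and "k \<ge> 1" and "F \<in> Yl l" and "H \<in> Yl k"
  shows "\<forall>w\<in>SVect.
           of_nat (k * (k + 1)) * ip (sgrad F) (bracket (sgrad H) w)
         = - of_nat (l * (l + 1)) * ip (sgrad H) (bracket (sgrad F) w)"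
proof
  fix w assume "w \<in> SVect"
  then obtain V where "ambient_field w V" and "\<And>t p. 0 < t \<Longrightarrow> t < pi \<Longrightarrow> divg w t p = 0"
    unfolding SVect_def smooth_vf_def chart_def ambient_field_def by fastforce
  moreover have "smooth3 F"
    and "\<And>t p. 0 < t \<Longrightarrow> t < pi \<Longrightarrow> LB (pb F) t p = - of_nat (l * (l + 1)) * pb F t p"
    and "smooth3 H"
    and "\<And>t p. 0 < t \<Longrightarrow> t < pi \<Longrightarrow> LB (pb H) t p = - of_nat (k * (k + 1)) * pb H t p"
    using assms(3,4) unfolding Yl_def chart_def by auto
  ultimately have "of_nat (k * (k + 1)) * ip (sgrad F) (bracket (sgrad H) w)
      + of_nat (l * (l + 1)) * ip (sgrad H) (bracket (sgrad F) w) = 0"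
    by (intro ambient_field.weighted_pairings_cancel)
  then show "of_nat (k * (k + 1)) * ip (sgrad F) (bracket (sgrad H) w)
      = - of_nat (l * (l + 1)) * ip (sgrad H) (bracket (sgrad F) w)"
    by (simp only: mult_minus_left eq_neg_iff_add_eq_0)
qed

end
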